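(* Consider the instance with $\bar v=1$, $\rho=1/2$, $v_t=1$ for all $t\in[T]$, and $G$ the uniform distribution on $\{1/3,2/3\}$. For any online throttling strategy $\beta$ and any realization $\bm p\in\{1/3,2/3\}^T$, letting $S$ be the number of entries of $\bm p$ equal to $1/3$, the total revenue satisfies \[R^\beta(\bm p)\le\begin{cases}\frac13(S+T), & S\ge T/2,\\[2pt] \frac23 S+\frac13\left\lfloor\frac{3T-2S}{4}\right\rfloor, & S<T/2.\end{cases}\]
   Context: A buyer participates in $T$ repeated second-price auctions with budget $B=\rho T$. In round $t$ she has value $v_t$ and the highest competing bid is $p_t$; she chooses $x_t\in\{0,1\}$, receiving revenue $x_t(v_t-p_t)^+$ and paying $x_tp_t\mathbf 1[v_t\ge p_t]$. An online throttling strategy chooses $x_t$ based on past observations, $v_t$ and internal randomness, and its total payment must not exceed $B$. $R^\beta(\bm p)$ denotes the total revenue $\sum_tx_t(v_t-p_t)^+$ (values being fixed at $1$). *)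

theory Defs
  imports Complex_Main
begin

text \<open>A (randomized) throttling strategy is a map beta t p w :: bool giving the decision x_t
in round t (t < T) for the price sequence p and internal randomness w.\<close>

definition price_seq :: "nat \<Rightarrow> (nat \<Rightarrow> real) \<Rightarrow> bool" where
  "price_seq T p \<longleftrightarrow> (\<forall>t<T. p t \<in> {1/3, 2/3})"

definition payment :: "nat \<Rightarrow> (nat \<Rightarrow> (nat \<Rightarrow> real) \<Rightarrow> 'w \<Rightarrow> bool) \<Rightarrow> (nat \<Rightarrow> real) \<Rightarrow> 'w \<Rightarrow> real" where
  "payment T beta p w = (\<Sum>t<T. if beta t p w \<and> (1::real) \<ge> p t then p t else 0)"

definition revenue :: "nat \<Rightarrow> (nat \<Rightarrow> (nat \<Rightarrow> real) \<Rightarrow> 'w \<Rightarrow> bool) \<Rightarrow> (nat \<Rightarrow> real) \<Rightarrow> 'w \<Rightarrow> real" where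
  "revenue T beta p w = (\<Sum>t<T. if beta t p w then max (1 - p t) 0 else 0)"

text \<open>Online: the decision in round t depends only on past prices p_0..p_(t-1)
(the value v_t = 1 is fixed) and the internal randomness; the budget B = T/2
is respected on every price sequence and every realization of the randomness.\<close>

definition online_throttling :: "nat \<Rightarrow> (nat \<Rightarrow> (nat \<Rightarrow> real) \<Rightarrow> 'w \<Rightarrow> bool) \<Rightarrow> bool" where
  "online_throttling T beta \<longleftrightarrow>
     (\<forall>t p p' w. (\<forall>s<t. p s = p' s) \<longrightarrow> beta t p w = beta t p' w) \<and>
     (\<forall>p w. price_seq T p \<longrightarrow> payment T beta p w \<le> real T / 2)"

end

theory Submission
  imports Defs
begin

text \<open>With every value equal to 1 and prices in {1/3, 2/3}, winning a cheap round yields revenue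
  2/3 at cost 1/3 and winning an expensive round yields revenue 1/3 at cost 2/3. If a cheap and
  b expensive rounds are won, the revenue is (2a + b)/3 and the budget forces a + 2b \<le> 3T/2;
  moreover a \<le> S and a + b \<le> T. Then 2a + b \<le> a + (a + b) \<le> S + T, and adding 6a \<le> 6S to
  2a + 4b \<le> 3T shows that the integer 2a + b - 2S is at most (3T - 2S)/4, hence at most its
  floor.\<close>

lemma sum_two_valued:
  fixes p :: "nat \<Rightarrow> 'a" and f :: "'a \<Rightarrow> real"
  assumes "\<And>t. t < T \<Longrightarrow> p t \<in> {x, y}" and "x \<noteq> y"
  shows "(\<Sum>t<T. if P t then f (p t) else 0) =
    f x * card {t. t < T \<and> P t \<and> p t = x} + f y * card {t. t < T \<and> P t \<and> p t = y}"
proof -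
  have "(\<Sum>t<T. if P t then f (p t) else 0) =
      (\<Sum>t<T. if P t \<and> p t = x then f x else 0) + (\<Sum>t<T. if P t \<and> p t = y then f y else 0)"
    unfolding sum.distrib[symmetric] by (rule sum.cong) (use assms in auto)
  also have "\<dots> = f x * card {t. t < T \<and> P t \<and> p t = x} + f y * card {t. t < T \<and> P t \<and> p t = y}"
    by (simp add: sum.inter_filter[symmetric] conj_commute)
  finally show ?thesis .
qed

definition rounds_won :: "nat \<Rightarrow> (nat \<Rightarrow> (nat \<Rightarrow> real) \<Rightarrow> 'w \<Rightarrow> bool) \<Rightarrow> (nat \<Rightarrow> real) \<Rightarrow> 'w \<Rightarrow> real \<Rightarrow> nat"
  where "rounds_won T beta p w c = card {t. t < T \<and> beta t p w \<and> p t = c}"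

lemma revenue_eq_rounds_won:
  assumes "price_seq T p"
  shows "revenue T beta p w = 2/3 * rounds_won T beta p w (1/3) + 1/3 * rounds_won T beta p w (2/3)"
  using sum_two_valued[of T p "1/3" "2/3" "\<lambda>t. beta t p w" "\<lambda>c. max (1 - c) 0"] assms
  by (simp add: revenue_def rounds_won_def price_seq_def)

lemma payment_eq_rounds_won:
  assumes "price_seq T p"
  shows "payment T beta p w = 1/3 * rounds_won T beta p w (1/3) + 2/3 * rounds_won T beta p w (2/3)"
proof -
  have "payment T beta p w = (\<Sum>t<T. if beta t p w then (if 1 \<ge> p t then p t else 0) else 0)"
    unfolding payment_def by (rule sum.cong) auto
  then show ?thesis
    using sum_two_valued[of T p "1/3" "2/3" "\<lambda>t. beta t p w" "\<lambda>c. if 1 \<ge> c then c else 0"] assms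
    by (simp add: rounds_won_def price_seq_def)
qed

lemma rounds_won_le: "rounds_won T beta p w c \<le> card {t. t < T \<and> p t = c}"
  unfolding rounds_won_def by (rule card_mono) auto

lemma rounds_won_add_le:
  assumes "c \<noteq> d"
  shows "rounds_won T beta p w c + rounds_won T beta p w d \<le> T"
proof -
  have "rounds_won T beta p w c + rounds_won T beta p w d =
      card ({t. t < T \<and> beta t p w \<and> p t = c} \<union> {t. t < T \<and> beta t p w \<and> p t = d})"
    unfolding rounds_won_def by (rule card_Un_disjoint[symmetric]) (use assms in auto)
  also have "\<dots> \<le> card {..<T}"
    by (rule card_mono) auto
  finally show ?thesis
    by simp
qed

lemma two_price_count_floor_bound:
  fixes a b S T :: nat
  assumes "a \<le> S" and "2 * a + 4 * b \<le> 3 * T"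
  shows "real (2 * a + b) \<le> 2 * real S + real_of_int \<lfloor>(3 * real T - 2 * real S) / 4\<rfloor>"
proof -
  have "int (2 * a + b) - 2 * int S \<le> \<lfloor>(3 * real T - 2 * real S) / 4\<rfloor>"
    unfolding le_floor_iff using assms by simp
  then have "real_of_int (int (2 * a + b) - 2 * int S) \<le> real_of_int \<lfloor>(3 * real T - 2 * real S) / 4\<rfloor>"
    by (simp only: of_int_le_iff)
  then show ?thesis
    by simp
qed

theorem lemma6:
  fixes T :: nat and beta :: "nat \<Rightarrow> (nat \<Rightarrow> real) \<Rightarrow> 'w \<Rightarrow> bool"
    and p :: "nat \<Rightarrow> real" and w :: 'w
  assumes "online_throttling T beta"
    and "price_seq T p"
  defines "S \<equiv> card {t. t < T \<and> p t = 1/3}"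
  shows "revenue T beta p w \<le>
    (if real S \<ge> real T / 2 then (real S + real T) / 3
     else 2/3 * real S + 1/3 * real_of_int \<lfloor>(3 * real T - 2 * real S) / 4\<rfloor>)"
proof -
  define a where "a = rounds_won T beta p w (1/3)"
  define b where "b = rounds_won T beta p w (2/3)"
  have revenue: "revenue T beta p w = (2 * real a + real b) / 3"
    using revenue_eq_rounds_won[OF assms(2), of beta w] by (simp add: a_def b_def)
  have "payment T beta p w \<le> real T / 2"
    using assms(1,2) unfolding online_throttling_def by blast
  then have budget: "2 * a + 4 * b \<le> 3 * T"
    using payment_eq_rounds_won[OF assms(2), of beta w] by (simp add: a_def b_def)
  have "a \<le> S"
    unfolding a_def S_def by (rule rounds_won_le)
  moreover have "a + b \<le> T"
    unfolding a_def b_def by (rule rounds_won_add_le) simp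
  ultimately show ?thesis
    using revenue two_price_count_floor_bound[OF \<open>a \<le> S\<close> budget] by simp
qed

end
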